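(* A Q-net $f:\mathbb Z^m\to\mathbb R^N$ is a discrete Koenigs net if and only if there exists a function $\nu:\mathbb Z^m\to\mathbb R\setminus\{0\}$ such that for every elementary quadrilateral $(f,f_i,f_{ij},f_j)$, with $M=(ff_{ij})\cap(f_if_j)$ the intersection point of its diagonals, $$\frac{\nu_{ij}}{\nu}=\frac{l(M,f_{ij})}{l(M,f)},\qquad \frac{\nu_j}{\nu_i}=\frac{l(M,f_j)}{l(M,f_i)}.$$ Such a $\nu$ is unique up to multiplication by one nonzero constant on the black points and another nonzero constant on the white points of $\mathbb Z^m$.
   Context: Let $N\ge 3$, $m\ge 2$. For a map $f:\mathbb Z^m\to\mathbb R^N$, write $e_i$ for the $i$-th unit vector of $\mathbb Z^m$, $f=f(u)$, $f_i=f(u+e_i)$, $f_{ij}=f(u+e_i+e_j)$; similarly $\nu_i=\nu(u+e_i)$, $\nu_{ij}=\nu(u+e_i+e_j)$; $\delta_i f=f_i-f$. A Q-net is a map $f:\mathbb Z^m\to\mathbb R^N$ such that for every $u$ and $i\ne j$ the elementary quadrilateral $(f,f_i,f_{ij},f_j)$ is planar; elementary quadrilaterals are assumed non-degenerate: four distinct vertices, no three collinear, and the diagonals $(ff_{ij})$, $(f_if_j)$ meet in a point $M$ different from all vertices. Two planar quadrilaterals $(A,B,C,D)$, $(A^*,B^*,C^*,D^* )$ are dual if corresponding sides are parallel ($A^*B^*\parallel AB$, $B^*C^*\parallel BC$, $C^*D^*\parallel CD$, $D^*A^*\parallel DA$) and non-corresponding diagonals are parallel ($A^*C^*\parallel BD$,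 $B^*D^*\parallel AC$). A Q-net $f$ is a discrete Koenigs net if there is a Q-net $f^*$ (a dual net) such that each $(f^*,f^*_i,f^*_{ij},f^*_j)$ is dual to $(f,f_i,f_{ij},f_j)$, i.e. $\delta_if^*\parallel\delta_if$, $\delta_jf^*\parallel\delta_jf$, $f^*_{ij}-f^*\parallel f_i-f_j$, $f^*_i-f^*_j\parallel f_{ij}-f$. For collinear points $P,Q$, $l(P,Q)$ denotes the directed (signed) length along their line (ratios of such lengths on one line are orientation-independent). A point $u\in\mathbb Z^m$ is black if $u_1+\dots+u_m$ is even, white otherwise. *)

theory Defs
  imports "HOL-Analysis.Analysis"
begin

definition unitv :: "'m::finite \<Rightarrow> int ^ 'm" where
  "unitv i = axis i 1"

definition black :: "int ^ 'm::finite \<Rightarrow> bool" where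
  "black u \<longleftrightarrow> even (\<Sum>k\<in>UNIV. u $ k)"

definition parallel :: "'a::real_vector \<Rightarrow> 'a \<Rightarrow> bool" where
  "parallel x y \<longleftrightarrow> (\<exists>c. x = c *\<^sub>R y \<or> y = c *\<^sub>R x)"

definition line :: "'a::real_vector \<Rightarrow> 'a \<Rightarrow> 'a set" where
  "line P Q = affine hull {P, Q}"

definition nondeg_quad :: "'a::euclidean_space \<Rightarrow> 'a \<Rightarrow> 'a \<Rightarrow> 'a \<Rightarrow> bool" where
  "nondeg_quad A B C D \<longleftrightarrow>
     coplanar {A, B, C, D} \<and> distinct [A, B, C, D] \<and>
     \<not> collinear {A, B, C} \<and> \<not> collinear {B, C, D} \<and>
     \<not> collinear {C, D, A} \<and> \<not> collinear {D, A, B} \<and>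
     (\<exists>M. M \<in> line A C \<and> M \<in> line B D \<and> M \<notin> {A, B, C, D})"

definition diag_point :: "'a::real_vector \<Rightarrow> 'a \<Rightarrow> 'a \<Rightarrow> 'a \<Rightarrow> 'a" where
  "diag_point A B C D = (THE M. M \<in> line A C \<and> M \<in> line B D)"

text \<open>Ratio of directed lengths l(M,P)/l(M,Q) for collinear M, P, Q with M \<noteq> Q.\<close>
definition len_ratio :: "'a::real_vector \<Rightarrow> 'a \<Rightarrow> 'a \<Rightarrow> real" where
  "len_ratio M P Q = (THE r. P - M = r *\<^sub>R (Q - M))"

definition qnet :: "(int ^ 'm::finite \<Rightarrow> real ^ 'n::finite) \<Rightarrow> bool" where
  "qnet f \<longleftrightarrow> (\<forall>u i j. i \<noteq> j \<longrightarrow>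
     nondeg_quad (f u) (f (u + unitv i)) (f (u + unitv i + unitv j)) (f (u + unitv j)))"

definition dual_quad :: "'a::real_vector \<Rightarrow> 'a \<Rightarrow> 'a \<Rightarrow> 'a \<Rightarrow> 'a \<Rightarrow> 'a \<Rightarrow> 'a \<Rightarrow> 'a \<Rightarrow> bool" where
  "dual_quad A B C D A' B' C' D' \<longleftrightarrow>
     parallel (B' - A') (B - A) \<and> parallel (C' - B') (C - B) \<and>
     parallel (D' - C') (D - C) \<and> parallel (A' - D') (A - D) \<and>
     parallel (C' - A') (D - B) \<and> parallel (D' - B') (C - A)"

definition koenigs :: "(int ^ 'm::finite \<Rightarrow> real ^ 'n::finite) \<Rightarrow> bool" where
  "koenigs f \<longleftrightarrow> (\<exists>fs :: int ^ 'm \<Rightarrow> real ^ 'n. qnet fs \<and>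
     (\<forall>u i j. i \<noteq> j \<longrightarrow>
        dual_quad (f u) (f (u + unitv i)) (f (u + unitv i + unitv j)) (f (u + unitv j))
                  (fs u) (fs (u + unitv i)) (fs (u + unitv i + unitv j)) (fs (u + unitv j))))"

definition nu_cond :: "(int ^ 'm::finite \<Rightarrow> real ^ 'n::finite) \<Rightarrow> (int ^ 'm \<Rightarrow> real) \<Rightarrow> bool" where
  "nu_cond f \<nu> \<longleftrightarrow> (\<forall>u. \<nu> u \<noteq> 0) \<and>
     (\<forall>u i j. i \<noteq> j \<longrightarrow>
       (let F = f u; Fi = f (u + unitv i); Fj = f (u + unitv j); Fij = f (u + unitv i + unitv j);
            M = diag_point F Fi Fij Fj
        in \<nu> (u + unitv i + unitv j) / \<nu> u = len_ratio M Fij F \<and>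
           \<nu> (u + unitv j) / \<nu> (u + unitv i) = len_ratio M Fj Fi))"

end

theory Submission
  imports Defs
begin

text \<open>
  Every non-degenerate planar quadrilateral (A,B,C,D) has canonical diagonal coordinates:
  with M the intersection of the diagonals, A = M + x, B = M + y, C = M + alpha x,
  D = M + beta y for independent x, y.  In these coordinates a dual quadrilateral is exactly
  one whose edges are those of (A,B,C,D) scaled by k, k/alpha, k/(alpha beta), k/beta
  (lemmas dual_quad_edge_relations and dual_quad_from_ratios).

  For a Q-net f with dual f', writing f'_i - f' = c_i (f_i - f), these relations say that
  1/c_i(u) = nu(u) nu(u + e_i) for a function nu with exactly the ratios of the theorem, and
  conversely such a nu defines the dual net by integrating the closed edge form
  (f_i - f)/(nu nu_i).  The necessary lattice facts are a discrete Poincare lemma (additive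
  and multiplicative), and the observation that a function invariant under the steps of the
  elementary quadrilaterals is constant on black and on white points, which gives uniqueness.
\<close>

section \<open>Affine geometry of a single quadrilateral\<close>

definition indep2 :: "'a::real_vector \<Rightarrow> 'a \<Rightarrow> bool" where
  "indep2 x y \<longleftrightarrow> (\<forall>s t. s *\<^sub>R x + t *\<^sub>R y = 0 \<longrightarrow> s = 0 \<and> t = 0)"

lemma indep2_coeffs:
  assumes "indep2 x y" "s *\<^sub>R x + t *\<^sub>R y = s' *\<^sub>R x + t' *\<^sub>R y"
  shows "s = s' \<and> t = t'"
proof -
  have "(s - s') *\<^sub>R x + (t - t') *\<^sub>R y = 0"
    using assms(2) by (simp add: algebra_simps)
  thus ?thesis using assms(1) unfolding indep2_def by force
qed

lemma indep2_sym: "indep2 x y \<Longrightarrow> indep2 y x"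
  unfolding indep2_def by (metis add.commute)

lemma indep2_nonzero: "indep2 x y \<Longrightarrow> x \<noteq> 0 \<and> y \<noteq> 0"
  unfolding indep2_def by (metis add.right_neutral add_0 scaleR_one scaleR_zero_left zero_neq_one)

lemma indep2_scale:
  assumes "indep2 x y" "a \<noteq> 0" "b \<noteq> 0"
  shows "indep2 (a *\<^sub>R x) (b *\<^sub>R y)"
  unfolding indep2_def
proof (intro allI impI)
  fix s t assume "s *\<^sub>R a *\<^sub>R x + t *\<^sub>R b *\<^sub>R y = 0"
  hence "(s * a) *\<^sub>R x + (t * b) *\<^sub>R y = 0" by simp
  hence "s * a = 0 \<and> t * b = 0" using assms(1) unfolding indep2_def by blast
  thus "s = 0 \<and> t = 0" using assms(2,3) by simp
qed

lemma affine_comb_on_ray: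
  fixes M x :: "'a::real_vector"
  assumes "s + t = 1"
  shows "s *\<^sub>R (M + a *\<^sub>R x) + t *\<^sub>R (M + b *\<^sub>R x) = M + (s * a + t * b) *\<^sub>R x"
proof -
  have "s *\<^sub>R M + t *\<^sub>R M = M" using assms by (metis scaleR_add_left scaleR_one)
  thus ?thesis by (simp add: algebra_simps)
qed

lemma base_on_line:
  assumes "a \<noteq> b"
  shows "M \<in> line (M + a *\<^sub>R x) (M + b *\<^sub>R x)"
proof -
  have "b / (b - a) + (- a / (b - a)) = 1"
    using assms by (simp add: diff_divide_distrib[symmetric])
  moreover have "b / (b - a) * a + (- a / (b - a)) * b = 0"
    using assms by (simp add: field_simps)
  ultimately have "M = (b / (b - a)) *\<^sub>R (M + a *\<^sub>R x) + (- a / (b - a)) *\<^sub>R (M + b *\<^sub>R x)"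
    using affine_comb_on_ray by (metis add.right_neutral scaleR_zero_left)
  thus ?thesis unfolding line_def affine_hull_2
    using \<open>b / (b - a) + (- a / (b - a)) = 1\<close> by blast
qed

lemma line_on_ray:
  assumes "X \<in> line (M + a *\<^sub>R x) (M + b *\<^sub>R x)"
  shows "\<exists>s. X = M + s *\<^sub>R x"
proof -
  obtain s t where "s + t = 1" "X = s *\<^sub>R (M + a *\<^sub>R x) + t *\<^sub>R (M + b *\<^sub>R x)"
    using assms unfolding line_def affine_hull_2 by blast
  thus ?thesis using affine_comb_on_ray by metis
qed

lemma not_collinear_rays:
  assumes xy: "indep2 x y" and "p \<noteq> q" "r \<noteq> 0"
  shows "\<not> collinear {M + p *\<^sub>R x, M + q *\<^sub>R x, M + r *\<^sub>R y}"
proof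
  assume "collinear {M + p *\<^sub>R x, M + q *\<^sub>R x, M + r *\<^sub>R y}"
  then obtain w c1 c2 where c1: "(M + p *\<^sub>R x) - (M + q *\<^sub>R x) = c1 *\<^sub>R w"
    and c2: "(M + r *\<^sub>R y) - (M + q *\<^sub>R x) = c2 *\<^sub>R w"
    unfolding collinear_def by (metis insertCI)
  have e1: "(p - q) *\<^sub>R x = c1 *\<^sub>R w" using c1 by (simp add: algebra_simps)
  have "c1 \<noteq> 0" using e1 indep2_nonzero[OF xy] \<open>p \<noteq> q\<close> by auto
  hence "w = ((p - q) / c1) *\<^sub>R x" using arg_cong[OF e1, of "\<lambda>z. (1 / c1) *\<^sub>R z"] by simp
  hence "r *\<^sub>R y - q *\<^sub>R x = (c2 * ((p - q) / c1)) *\<^sub>R x"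
    using c2 by (simp add: algebra_simps)
  hence "(- q - c2 * ((p - q) / c1)) *\<^sub>R x + r *\<^sub>R y = 0"
    by (simp add: algebra_simps)
  thus False using xy \<open>r \<noteq> 0\<close> unfolding indep2_def by blast
qed

(* Diagonal coordinates of a quadrilateral (A,B,C,D): the diagonals meet in M, A = M + x,
   B = M + y, and C, D lie on the diagonals with ratios alpha = l(M,C)/l(M,A) and
   beta = l(M,D)/l(M,B). *)
definition quad_coords ::
  "'a::real_vector \<Rightarrow> 'a \<Rightarrow> 'a \<Rightarrow> 'a \<Rightarrow> 'a \<Rightarrow> 'a \<Rightarrow> 'a \<Rightarrow> real \<Rightarrow> real \<Rightarrow> bool" where
  "quad_coords A B C D M x y \<alpha> \<beta> \<longleftrightarrow> indep2 x y \<and>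
     \<alpha> \<noteq> 0 \<and> \<alpha> \<noteq> 1 \<and> \<beta> \<noteq> 0 \<and> \<beta> \<noteq> 1 \<and>
     A = M + x \<and> B = M + y \<and> C = M + \<alpha> *\<^sub>R x \<and> D = M + \<beta> *\<^sub>R y"

lemma quad_coords_nondeg:
  fixes A :: "'a::euclidean_space"
  assumes "quad_coords A B C D M x y \<alpha> \<beta>"
  shows "nondeg_quad A B C D"
proof -
  note q = assms[unfolded quad_coords_def]
  have xy: "indep2 x y" and yx: "indep2 y x" using q indep2_sym by auto
  have nz: "x \<noteq> 0" "y \<noteq> 0" using indep2_nonzero[OF xy] by auto
  have "M + s *\<^sub>R x + t *\<^sub>R y \<in> affine hull {M, M + x, M + y}" for s t
  proof -
    have "M + s *\<^sub>R x + t *\<^sub>R y = (1 - s - t) *\<^sub>R M + s *\<^sub>R (M + x) + t *\<^sub>R (M + y)"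
      by (simp add: algebra_simps)
    thus ?thesis unfolding affine_hull_3 by force
  qed
  from this[of 1 0] this[of 0 1] this[of \<alpha> 0] this[of 0 \<beta>]
  have "{A, B, C, D} \<subseteq> affine hull {M, M + x, M + y}" using q by simp
  hence coplanar: "coplanar {A, B, C, D}" unfolding coplanar_def by blast
  have apart: "M + s *\<^sub>R x \<noteq> M + t *\<^sub>R y" "M + t *\<^sub>R y \<noteq> M + s *\<^sub>R x" if "s \<noteq> 0" for s t
    using indep2_coeffs[OF xy, of s 0 0 t] that by auto
  have "\<alpha> *\<^sub>R x \<noteq> x" "\<beta> *\<^sub>R y \<noteq> y"
    using q nz by (metis scaleR_cancel_right scaleR_one)+
  hence "distinct [A, B, C, D]"
    using q nz apart(1)[of 1 1] apart(1)[of 1 \<beta>] apart(2)[of \<alpha> 1] apart(1)[of \<alpha> \<beta>]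
    by auto
  moreover have "\<not> collinear {A, B, C}" "\<not> collinear {C, D, A}"
    using not_collinear_rays[OF xy, of 1 \<alpha> 1 M] not_collinear_rays[OF xy, of \<alpha> 1 \<beta> M] q
    by (simp_all add: insert_commute)
  moreover have "\<not> collinear {B, C, D}" "\<not> collinear {D, A, B}"
    using not_collinear_rays[OF yx, of 1 \<beta> \<alpha> M] not_collinear_rays[OF yx, of \<beta> 1 1 M] q
    by (simp_all add: insert_commute)
  moreover have "M \<in> line A C" "M \<in> line B D"
    using base_on_line[of 1 \<alpha> M x] base_on_line[of 1 \<beta> M y] q by auto
  moreover have "M \<notin> {A, B, C, D}" using q nz by auto
  ultimately show ?thesis unfolding nondeg_quad_def using coplanar by blast
qed

lemma len_ratio_on_ray:
  assumes "x \<noteq> 0"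
  shows "len_ratio M (M + b *\<^sub>R x) (M + x) = b"
  unfolding len_ratio_def
proof (rule the_equality)
  fix r assume "M + b *\<^sub>R x - M = r *\<^sub>R (M + x - M)"
  thus "r = b" using assms by simp
qed simp

lemma quad_coords_diag:
  assumes "quad_coords A B C D M x y \<alpha> \<beta>"
  shows "diag_point A B C D = M \<and> len_ratio M C A = \<alpha> \<and> len_ratio M D B = \<beta>"
proof -
  note q = assms[unfolded quad_coords_def]
  have xy: "indep2 x y" using q by blast
  have lines: "line A C = line (M + 1 *\<^sub>R x) (M + \<alpha> *\<^sub>R x)"
    "line B D = line (M + 1 *\<^sub>R y) (M + \<beta> *\<^sub>R y)" using q by simp_all
  have "X = M" if X: "X \<in> line A C" "X \<in> line B D" for X
  proof -
    obtain s t where "X = M + s *\<^sub>R x" "X = M + t *\<^sub>R y"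
      using X line_on_ray unfolding lines by metis
    hence "s *\<^sub>R x + 0 *\<^sub>R y = 0 *\<^sub>R x + t *\<^sub>R y" by simp
    hence "s = 0" using indep2_coeffs[OF xy] by blast
    thus "X = M" using \<open>X = M + s *\<^sub>R x\<close> by simp
  qed
  moreover have "M \<in> line A C" "M \<in> line B D"
    unfolding lines using q base_on_line[of 1 \<alpha> M x] base_on_line[of 1 \<beta> M y] by auto
  ultimately have "diag_point A B C D = M"
    unfolding diag_point_def by blast
  moreover have "len_ratio M C A = \<alpha>" "len_ratio M D B = \<beta>"
    using q indep2_nonzero[OF xy] len_ratio_on_ray by auto
  ultimately show ?thesis by blast
qed

lemma point_on_diagonal:
  assumes "P \<in> line A C" "P \<noteq> A" "P \<noteq> C"
  shows "\<exists>\<alpha>. \<alpha> \<noteq> 0 \<and> \<alpha> \<noteq> 1 \<and> C = P + \<alpha> *\<^sub>R (A - P)"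
proof -
  obtain s t where "s + t = 1" "P = s *\<^sub>R A + t *\<^sub>R C"
    using assms(1) unfolding line_def affine_hull_2 by blast
  hence P: "P = (1 - t) *\<^sub>R A + t *\<^sub>R C" by (metis add_diff_cancel_right')
  have "t \<noteq> 0" "t \<noteq> 1" using assms(2,3) P by auto
  have "A - P = t *\<^sub>R (A - C)" using P by (simp add: algebra_simps)
  hence "(1 / t) *\<^sub>R (A - P) = A - C" using \<open>t \<noteq> 0\<close> by simp
  hence "C = P + (1 - 1 / t) *\<^sub>R (A - P)" by (simp add: algebra_simps)
  moreover have "1 - 1 / t \<noteq> 0" "1 - 1 / t \<noteq> 1"
    using \<open>t \<noteq> 0\<close> \<open>t \<noteq> 1\<close> by (simp_all add: field_simps)
  ultimately show ?thesis by blast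
qed

lemma nondeg_quad_coords:
  assumes nd: "nondeg_quad A B C D"
  defines "M \<equiv> diag_point A B C D"
  shows "quad_coords A B C D M (A - M) (B - M) (len_ratio M C A) (len_ratio M D B)"
proof -
  note nd = nd[unfolded nondeg_quad_def]
  obtain P where P: "P \<in> line A C" "P \<in> line B D" "P \<notin> {A, B, C, D}" using nd by blast
  obtain \<alpha> \<beta> where \<alpha>: "\<alpha> \<noteq> 0" "\<alpha> \<noteq> 1" "C = P + \<alpha> *\<^sub>R (A - P)"
    and \<beta>: "\<beta> \<noteq> 0" "\<beta> \<noteq> 1" "D = P + \<beta> *\<^sub>R (B - P)"
    using point_on_diagonal P by (metis insertCI)
  have "indep2 (A - P) (B - P)"
    unfolding indep2_def
  proof (intro allI impI)
    fix p q assume pq: "p *\<^sub>R (A - P) + q *\<^sub>R (B - P) = 0"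
    have "A - P \<noteq> 0" using P by auto
    show "p = 0 \<and> q = 0"
    proof (cases "q = 0")
      case True
      thus ?thesis using pq \<open>A - P \<noteq> 0\<close> by simp
    next
      case False
      have "q *\<^sub>R (B - P) = - p *\<^sub>R (A - P)"
        using pq by (simp add: eq_neg_iff_add_eq_0 add.commute)
      from arg_cong[OF this, of "\<lambda>z. (1 / q) *\<^sub>R z"]
      have "B - P = (- p / q) *\<^sub>R (A - P)" using False by simp
      hence "A = P + 1 *\<^sub>R (A - P)" "B = P + (- p / q) *\<^sub>R (A - P)" by (simp_all add: algebra_simps)
      hence "\<forall>z\<in>{A, B, C}. \<exists>c. z = P + c *\<^sub>R (A - P)" using \<alpha>(3) by blast
      hence "collinear {A, B, C}" unfolding collinear_alt by blast
      thus ?thesis using nd by blast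
    qed
  qed
  hence "quad_coords A B C D P (A - P) (B - P) \<alpha> \<beta>"
    unfolding quad_coords_def using \<alpha> \<beta> by simp
  from this quad_coords_diag[OF this] show ?thesis
    unfolding M_def by simp
qed

lemma parallel_scaled: "parallel (c *\<^sub>R v) v"
  unfolding parallel_def by blast

lemma parallel_same_direction: "t \<noteq> 0 \<Longrightarrow> parallel (s *\<^sub>R y) (t *\<^sub>R y)"
  unfolding parallel_def by (rule exI[of _ "s / t"]) simp

lemma parallel_nonzero:
  assumes "parallel X Y" "X \<noteq> 0" "Y \<noteq> 0"
  shows "\<exists>c. c \<noteq> 0 \<and> X = c *\<^sub>R Y"
proof -
  obtain c where "X = c *\<^sub>R Y \<or> Y = c *\<^sub>R X" using assms(1) unfolding parallel_def by blast
  thus ?thesis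
  proof
    assume "Y = c *\<^sub>R X"
    hence "c \<noteq> 0" "X = (1 / c) *\<^sub>R Y" using assms(3) by auto
    thus ?thesis by (metis divide_eq_0_iff one_neq_zero)
  qed (use assms(2) in auto)
qed

lemma parallel_axis_coeff:
  assumes xy: "indep2 x y" and "r \<noteq> 0" and "parallel (p *\<^sub>R x + q *\<^sub>R y) (r *\<^sub>R y)"
  shows "p = 0"
proof -
  obtain c where "p *\<^sub>R x + q *\<^sub>R y = c *\<^sub>R (r *\<^sub>R y) \<or> r *\<^sub>R y = c *\<^sub>R (p *\<^sub>R x + q *\<^sub>R y)"
    using assms(3) unfolding parallel_def by blast
  thus ?thesis
  proof
    assume "p *\<^sub>R x + q *\<^sub>R y = c *\<^sub>R (r *\<^sub>R y)"
    hence "p *\<^sub>R x + q *\<^sub>R y = 0 *\<^sub>R x + (c * r) *\<^sub>R y" by simp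
    thus ?thesis using indep2_coeffs[OF xy] by blast
  next
    assume "r *\<^sub>R y = c *\<^sub>R (p *\<^sub>R x + q *\<^sub>R y)"
    hence "(c * p) *\<^sub>R x + (c * q) *\<^sub>R y = 0 *\<^sub>R x + r *\<^sub>R y" by (simp add: algebra_simps)
    hence "c * p = 0" "c * q = r" using indep2_coeffs[OF xy] by blast+
    thus ?thesis using \<open>r \<noteq> 0\<close> by auto
  qed
qed

(* Forward half of the local duality: if the edges of a dual quadrilateral are the edges of
   (A,B,C,D) scaled by c_i, c_ji (at B), c_j and c_ij (at D), then parallelism of the
   non-corresponding diagonals forces c_ji alpha = c_i, c_ij alpha = c_j, c_j beta = c_i. *)
lemma dual_quad_edge_relations:
  assumes q: "quad_coords A B C D M x y \<alpha> \<beta>"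
    and AB: "B' - A' = c\<^sub>i *\<^sub>R (B - A)" and BC: "C' - B' = c\<^sub>j\<^sub>i *\<^sub>R (C - B)"
    and AD: "D' - A' = c\<^sub>j *\<^sub>R (D - A)" and DC: "C' - D' = c\<^sub>i\<^sub>j *\<^sub>R (C - D)"
    and dual: "dual_quad A B C D A' B' C' D'"
  shows "c\<^sub>j\<^sub>i * \<alpha> = c\<^sub>i \<and> c\<^sub>i\<^sub>j * \<alpha> = c\<^sub>j \<and> c\<^sub>j * \<beta> = c\<^sub>i"
proof -
  note qq = q[unfolded quad_coords_def]
  have xy: "indep2 x y" and yx: "indep2 y x" using qq indep2_sym by auto
  have BD: "D - B = (\<beta> - 1) *\<^sub>R y" and AC: "C - A = (\<alpha> - 1) *\<^sub>R x"
    using qq by (simp_all add: algebra_simps)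
  have "C' - A' = (C' - B') + (B' - A')" by simp
  also have "\<dots> = (c\<^sub>j\<^sub>i * \<alpha> - c\<^sub>i) *\<^sub>R x + (c\<^sub>i - c\<^sub>j\<^sub>i) *\<^sub>R y"
    unfolding AB BC using qq by (simp add: algebra_simps)
  finally have AC'1: "C' - A' = (c\<^sub>j\<^sub>i * \<alpha> - c\<^sub>i) *\<^sub>R x + (c\<^sub>i - c\<^sub>j\<^sub>i) *\<^sub>R y" .
  have "C' - A' = (C' - D') + (D' - A')" by simp
  also have "\<dots> = (c\<^sub>i\<^sub>j * \<alpha> - c\<^sub>j) *\<^sub>R x + (c\<^sub>j * \<beta> - c\<^sub>i\<^sub>j * \<beta>) *\<^sub>R y"
    unfolding AD DC using qq by (simp add: algebra_simps)
  finally have AC'2: "C' - A' = (c\<^sub>i\<^sub>j * \<alpha> - c\<^sub>j) *\<^sub>R x + (c\<^sub>j * \<beta> - c\<^sub>i\<^sub>j * \<beta>) *\<^sub>R y" .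
  have "D' - B' = (D' - A') - (B' - A')" by simp
  also have "\<dots> = (c\<^sub>j * \<beta> - c\<^sub>i) *\<^sub>R y + (c\<^sub>i - c\<^sub>j) *\<^sub>R x"
    unfolding AB AD using qq by (simp add: algebra_simps)
  finally have BD': "D' - B' = (c\<^sub>j * \<beta> - c\<^sub>i) *\<^sub>R y + (c\<^sub>i - c\<^sub>j) *\<^sub>R x" .
  have \<alpha>\<beta>: "\<beta> - 1 \<noteq> 0" "\<alpha> - 1 \<noteq> 0" using qq by auto
  have diag1: "parallel (C' - A') (D - B)" and diag2: "parallel (D' - B') (C - A)"
    using dual unfolding dual_quad_def by blast+
  have "c\<^sub>j\<^sub>i * \<alpha> - c\<^sub>i = 0"
    using parallel_axis_coeff[OF xy \<alpha>\<beta>(1) diag1[unfolded AC'1 BD]] .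
  moreover have "c\<^sub>i\<^sub>j * \<alpha> - c\<^sub>j = 0"
    using parallel_axis_coeff[OF xy \<alpha>\<beta>(1) diag1[unfolded AC'2 BD]] .
  moreover have "c\<^sub>j * \<beta> - c\<^sub>i = 0"
    using parallel_axis_coeff[OF yx \<alpha>\<beta>(2) diag2[unfolded BD' AC]] .
  ultimately show ?thesis by simp
qed

(* Backward half: scaling the edges AB, BC, AD by k, k/alpha, k/beta closes up with the edge
   DC scaled by k/(alpha beta), and the result is a non-degenerate dual quadrilateral; in
   diagonal coordinates it is (M' - k y, M' - k x, M' - (k/alpha) y, M' - (k/beta) x). *)
lemma dual_quad_from_ratios:
  assumes q: "quad_coords A B C D M x y \<alpha> \<beta>" and k: "k \<noteq> 0"
    and AB: "B' = A' + k *\<^sub>R (B - A)" and BC: "C' = B' + (k / \<alpha>) *\<^sub>R (C - B)"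
    and AD: "D' = A' + (k / \<beta>) *\<^sub>R (D - A)"
  shows "C' = D' + (k / (\<alpha> * \<beta>)) *\<^sub>R (C - D) \<and> nondeg_quad A' B' C' D' \<and>
         dual_quad A B C D A' B' C' D'"
proof -
  note qq = q[unfolded quad_coords_def]
  define M' where "M' = A' + k *\<^sub>R y"
  have A': "A' = M' + (- k) *\<^sub>R y" unfolding M'_def by simp
  have B': "B' = M' + (- k) *\<^sub>R x" unfolding M'_def AB using qq by (simp add: algebra_simps)
  have C': "C' = M' + (1 / \<alpha>) *\<^sub>R ((- k) *\<^sub>R y)"
    unfolding BC B' using qq by (simp add: algebra_simps)
  have D': "D' = M' + (1 / \<beta>) *\<^sub>R ((- k) *\<^sub>R x)"
    unfolding AD A' using qq by (simp add: algebra_simps)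
  have DC: "C' = D' + (k / (\<alpha> * \<beta>)) *\<^sub>R (C - D)"
    unfolding C' D' using qq by (simp add: algebra_simps)
  have "indep2 y x" using qq indep2_sym by blast
  hence "indep2 ((- k) *\<^sub>R y) ((- k) *\<^sub>R x)"
    by (rule indep2_scale) (use k in simp_all)
  hence "quad_coords A' B' C' D' M' ((- k) *\<^sub>R y) ((- k) *\<^sub>R x) (1 / \<alpha>) (1 / \<beta>)"
    unfolding quad_coords_def using A' B' C' D' qq by simp
  hence "nondeg_quad A' B' C' D'" by (rule quad_coords_nondeg)
  moreover have "dual_quad A B C D A' B' C' D'"
  proof -
    have edge_CD: "D' - C' = (k / (\<alpha> * \<beta>)) *\<^sub>R (D - C)"
      unfolding DC by (simp add: algebra_simps)
    have edges: "B' - A' = k *\<^sub>R (B - A)" "C' - B' = (k / \<alpha>) *\<^sub>R (C - B)"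
      "A' - D' = (k / \<beta>) *\<^sub>R (A - D)"
      unfolding AB BC AD by (simp_all add: algebra_simps)
    have diagonals: "C' - A' = (k - k / \<alpha>) *\<^sub>R y" "D - B = (\<beta> - 1) *\<^sub>R y"
      "D' - B' = (k - k / \<beta>) *\<^sub>R x" "C - A = (\<alpha> - 1) *\<^sub>R x"
      unfolding A' B' C' D' using qq by (simp_all add: algebra_simps)
    show ?thesis
      unfolding dual_quad_def edges edge_CD diagonals
      by (intro conjI parallel_scaled parallel_same_direction) (use qq in auto)
  qed
  ultimately show ?thesis using DC by blast
qed

section \<open>Lattice facts: colours, discrete potentials, parity\<close>

lemma unitv_commute: "(u :: int ^ 'm::finite) + unitv j + unitv i = u + unitv i + unitv j"
  by (simp add: algebra_simps)

lemma axis_add_int: "axis k (a :: int) + axis k b = axis k (a + b)"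
  by (simp add: vec_eq_iff axis_def)

lemma axis_zero_int [simp]: "axis k (0 :: int) = 0"
  by (simp add: vec_eq_iff axis_def)

lemma black_add_unitv: "black (u + unitv i) \<longleftrightarrow> \<not> black u"
proof -
  have "(\<Sum>k\<in>UNIV. (u + unitv i) $ k) = (\<Sum>k\<in>UNIV. u $ k) + (\<Sum>k\<in>UNIV. if k = i then 1 else 0)"
    by (simp add: unitv_def axis_def sum.distrib)
  thus ?thesis unfolding black_def by simp
qed

lemma black_zero: "black (0 :: int ^ 'm::finite)"
  unfolding black_def by simp

lemma exists_other_direction:
  assumes "CARD('m::finite) \<ge> 2"
  shows "\<exists>j::'m. j \<noteq> k"
proof (rule ccontr)
  assume "\<not> (\<exists>j::'m. j \<noteq> k)"
  hence "(UNIV :: 'm set) = {k}" by auto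
  hence "CARD('m) = 1" by (metis card.empty card_insert_disjoint empty_iff finite.emptyI One_nat_def)
  thus False using assms by simp
qed

definition int_primitive :: "(int \<Rightarrow> 'a::ab_group_add) \<Rightarrow> int \<Rightarrow> 'a" where
  "int_primitive g n = (if 0 \<le> n then (\<Sum>t\<in>{0..<n}. g t) else - (\<Sum>t\<in>{n..<0}. g t))"

lemma int_primitive_zero [simp]: "int_primitive g 0 = 0"
  unfolding int_primitive_def by simp

lemma int_primitive_step: "int_primitive g (n + 1) = int_primitive g n + g n"
proof (cases "0 \<le> n")
  case True
  hence "{0..<n + 1} = insert n {0..<n}" by auto
  thus ?thesis unfolding int_primitive_def using True by (simp add: add.commute)
next
  case False
  hence "{n..<0} = insert n {n + 1..<0}" by auto
  moreover have "int_primitive g (n + 1) = - (\<Sum>t\<in>{n + 1..<0}. g t)"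
    using False by (cases "n + 1 = 0") (auto simp: int_primitive_def)
  ultimately show ?thesis unfolding int_primitive_def using False by simp
qed

lemma int_telescope_unique:
  fixes H K :: "int \<Rightarrow> 'a::ab_group_add"
  assumes "H 0 = K 0" and "\<And>n. H (n + 1) - H n = K (n + 1) - K n"
  shows "H n = K n"
proof (induction n rule: int_induct[where k = 0])
  case base show ?case by (rule assms(1))
next
  case (step1 n) thus ?case using assms(2)[of n] by (metis diff_add_cancel)
next
  case (step2 n) thus ?case using assms(2)[of "n - 1"] by (simp add: algebra_simps)
qed

(* Induction step of the discrete Poincare lemma: a potential for the directions in S extends,
   by integrating along a further direction k, to a potential for insert k S. *)
lemma potential_extend:
  fixes w :: "'m::finite \<Rightarrow> int ^ 'm \<Rightarrow> 'a::ab_group_add"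
  assumes cocycle: "\<And>u i j. w i u + w j (u + unitv i) = w j u + w i (u + unitv j)"
    and F: "\<And>u i. i \<in> S \<Longrightarrow> F (u + unitv i) = F u + w i u"
  shows "\<exists>G. \<forall>u. \<forall>i\<in>insert k S. G (u + unitv i) = G u + w i u"
proof -
  define h where "h v n = F v + int_primitive (\<lambda>t. w k (v + axis k t)) n" for v n
  have h_step: "h v (n + 1) = h v n + w k (v + axis k n)" for v n
    unfolding h_def int_primitive_step by (simp add: add.assoc)
  have h_shift: "h (v + unitv i) n = h v n + w i (v + axis k n)" if "i \<in> S" for v n i
  proof (rule int_telescope_unique[where H = "h (v + unitv i)"])
    show "h (v + unitv i) 0 = h v 0 + w i (v + axis k 0)"
      unfolding h_def using F[OF that] by simp
    fix n
    have "v + axis k (n + 1) = v + axis k n + unitv k"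
      unfolding unitv_def by (simp add: add.assoc axis_add_int)
    moreover have "v + unitv i + axis k n = v + axis k n + unitv i"
      by (simp add: algebra_simps)
    ultimately show "h (v + unitv i) (n + 1) - h (v + unitv i) n =
        (h v (n + 1) + w i (v + axis k (n + 1))) - (h v n + w i (v + axis k n))"
      unfolding h_step using cocycle[of i "v + axis k n" k] by (simp add: algebra_simps)
  qed
  define G where "G u = h (u - axis k (u $ k)) (u $ k)" for u
  have "G (u + unitv i) = G u + w i u" if "i \<in> insert k S" for u i
  proof (cases "i = k")
    case True
    have "(u + unitv i) $ k = u $ k + 1"
      "u + unitv i - axis k (u $ k + 1) = u - axis k (u $ k)"
      using True by (simp_all add: vec_eq_iff unitv_def axis_def)
    hence "G (u + unitv i) = h (u - axis k (u $ k)) (u $ k + 1)"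
      by (simp only: G_def)
    thus ?thesis unfolding h_step G_def using True by simp
  next
    case False
    hence "i \<in> S" using that by simp
    have "(u + unitv i) $ k = u $ k"
      "u + unitv i - axis k (u $ k) = u - axis k (u $ k) + unitv i"
      using False by (simp_all add: vec_eq_iff unitv_def axis_def)
    hence "G (u + unitv i) = h (u - axis k (u $ k) + unitv i) (u $ k)"
      by (simp only: G_def)
    thus ?thesis unfolding h_shift[OF \<open>i \<in> S\<close>] G_def by simp
  qed
  thus ?thesis by blast
qed

lemma potential:
  fixes w :: "'m::finite \<Rightarrow> int ^ 'm \<Rightarrow> 'a::ab_group_add"
  assumes cocycle: "\<And>u i j. w i u + w j (u + unitv i) = w j u + w i (u + unitv j)"
  shows "\<exists>F. \<forall>u i. F (u + unitv i) = F u + w i u"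
proof -
  have "\<exists>F. \<forall>u. \<forall>i\<in>S. F (u + unitv i) = F u + w i u" if "finite S" for S :: "'m set"
    using that
  proof (induction S rule: finite_induct)
    case (insert k S)
    then obtain F where "\<And>u i. i \<in> S \<Longrightarrow> F (u + unitv i) = F u + w i u" by blast
    thus ?case by (rule potential_extend[where w = w, OF cocycle])
  qed simp
  thus ?thesis by (metis finite UNIV_I)
qed

lemma lattice_induct:
  fixes P :: "int ^ 'm::finite \<Rightarrow> bool"
  assumes "P 0" and up: "\<And>u i. P u \<Longrightarrow> P (u + unitv i)" and down: "\<And>u i. P u \<Longrightarrow> P (u - unitv i)"
  shows "P u"
proof -
  have "\<forall>u. (\<forall>l. l \<notin> S \<longrightarrow> u $ l = 0) \<longrightarrow> P u" if "finite S" for S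
    using that
  proof (induction S rule: finite_induct)
    case empty
    have "u = 0" if "\<forall>l. u $ l = 0" for u :: "int ^ 'm" using that by (simp add: vec_eq_iff)
    thus ?case using assms(1) by auto
  next
    case (insert k S)
    show ?case
    proof (intro allI impI)
      fix u :: "int ^ 'm" assume u: "\<forall>l. l \<notin> insert k S \<longrightarrow> u $ l = 0"
      define p where "p = u - axis k (u $ k)"
      have "P p" using insert.IH u unfolding p_def by (simp add: axis_def)
      have "P (p + axis k n)" for n
      proof (induction n rule: int_induct[where k = 0])
        case base show ?case using \<open>P p\<close> by simp
      next
        case (step1 n)
        have "p + axis k (n + 1) = p + axis k n + unitv k"
          unfolding unitv_def by (simp add: add.assoc axis_add_int)
        thus ?case using up[OF step1(2), of k] by metis
      next
        case (step2 n)
        have "p + axis k (n - 1) = p + axis k n - unitv k"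
          unfolding unitv_def by (simp add: vec_eq_iff axis_def)
        thus ?case using down[OF step2(2), of k] by metis
      qed
      from this[of "u $ k"] show "P u" unfolding p_def by simp
    qed
  qed
  thus ?thesis by (metis finite UNIV_I)
qed

(* The multiplicative group of nonzero reals, written additively so that the Poincare lemma
   applies to multiplicative cocycles. *)
typedef nonzero_real = "{x :: real. x \<noteq> 0}" morphisms real_of_nz nz_of_real
  by (rule exI[of _ 1]) simp

setup_lifting type_definition_nonzero_real

instantiation nonzero_real :: ab_group_add
begin
lift_definition zero_nonzero_real :: nonzero_real is 1 by simp
lift_definition plus_nonzero_real :: "nonzero_real \<Rightarrow> nonzero_real \<Rightarrow> nonzero_real" is "(*)"
  by simp
lift_definition minus_nonzero_real :: "nonzero_real \<Rightarrow> nonzero_real \<Rightarrow> nonzero_real" is "(/)"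
  by simp
lift_definition uminus_nonzero_real :: "nonzero_real \<Rightarrow> nonzero_real" is inverse by simp
instance by standard (transfer, simp add: field_simps)+
end

lemma multiplicative_potential:
  fixes W :: "'m::finite \<Rightarrow> int ^ 'm \<Rightarrow> real"
  assumes nonzero: "\<And>i u. W i u \<noteq> 0"
    and cocycle: "\<And>u i j. W i u * W j (u + unitv i) = W j u * W i (u + unitv j)"
  shows "\<exists>F. (\<forall>u. F u \<noteq> 0) \<and> (\<forall>u i. F (u + unitv i) = F u * W i u)"
proof -
  define w where "w i u = nz_of_real (W i u)" for i u
  have W: "real_of_nz (w i u) = W i u" for i u
    unfolding w_def using nonzero by (simp add: nz_of_real_inverse)
  have "w i u + w j (u + unitv i) = w j u + w i (u + unitv j)" for u i j
    by (simp add: real_of_nz_inject[symmetric] plus_nonzero_real.rep_eq W cocycle)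
  then obtain G where "\<forall>u i. G (u + unitv i) = G u + w i u"
    using potential[where w = w] by blast
  hence "\<forall>u i. real_of_nz (G (u + unitv i)) = real_of_nz (G u) * W i u"
    by (simp add: plus_nonzero_real.rep_eq W)
  moreover have "\<forall>u. real_of_nz (G u) \<noteq> 0" using real_of_nz by simp
  ultimately show ?thesis by (intro exI[of _ "\<lambda>u. real_of_nz (G u)"]) simp
qed

(* Solution of nu(u) nu(u + e_i) = 1/c_i(u): a multiplicative potential mu of c on black and
   of 1/c on white points yields nu = mu on black and 1/mu on white points. *)
lemma alternating_potential:
  fixes c :: "'m::finite \<Rightarrow> int ^ 'm \<Rightarrow> real"
  assumes nonzero: "\<And>i u. c i u \<noteq> 0"
    and cocycle: "\<And>u i j. c i u * c i (u + unitv j) = c j u * c j (u + unitv i)"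
  shows "\<exists>\<nu>. (\<forall>u. \<nu> u \<noteq> 0) \<and> (\<forall>u i. \<nu> u * \<nu> (u + unitv i) = 1 / c i u)"
proof -
  define W where "W i u = (if black u then c i u else 1 / c i u)" for i u
  have "W i u \<noteq> 0" for i u unfolding W_def using nonzero by simp
  moreover have "W i u * W j (u + unitv i) = W j u * W i (u + unitv j)" for u i j
    using cocycle[of i u j] nonzero[of i] nonzero[of j]
    unfolding W_def black_add_unitv by (simp add: field_simps)
  ultimately obtain \<mu> where \<mu>: "\<And>u. \<mu> u \<noteq> 0" "\<And>u i. \<mu> (u + unitv i) = \<mu> u * W i u"
    using multiplicative_potential[of W] by blast
  define \<nu> where "\<nu> u = (if black u then \<mu> u else 1 / \<mu> u)" for u
  have "\<nu> u * \<nu> (u + unitv i) = 1 / c i u" for u i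
    using \<mu>(1)[of u] \<mu>(2)[of u i] nonzero[of i u]
    unfolding \<nu>_def W_def black_add_unitv by (simp add: field_simps)
  moreover have "\<nu> u \<noteq> 0" for u unfolding \<nu>_def using \<mu> by simp
  ultimately show ?thesis by blast
qed

lemma parity_constant:
  fixes \<rho> :: "int ^ 'm::finite \<Rightarrow> real"
  assumes dim: "CARD('m) \<ge> 2"
    and diag: "\<And>u i j. i \<noteq> j \<Longrightarrow> \<rho> (u + unitv i + unitv j) = \<rho> u"
    and codiag: "\<And>u i j. i \<noteq> j \<Longrightarrow> \<rho> (u + unitv j) = \<rho> (u + unitv i)"
  shows "\<rho> u = (if black u then \<rho> 0 else \<rho> (unitv i\<^sub>0))"
proof -
  have neighbours: "\<rho> (u + unitv k) = \<rho> (u + unitv l)" for u k l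
    using codiag[of k l u] by (cases "k = l") auto
  have two_steps: "\<rho> (u + unitv k + unitv l) = \<rho> u" for u k l
  proof (cases "k = l")
    case True
    obtain j where "j \<noteq> k" using exists_other_direction[OF dim] by blast
    have "\<rho> (u + unitv k + unitv k) = \<rho> ((u + unitv k - unitv j) + unitv k + unitv j)"
      by (simp add: algebra_simps)
    also have "\<dots> = \<rho> (u + unitv k - unitv j)"
      by (rule diag) (use \<open>j \<noteq> k\<close> in simp)
    also have "\<dots> = \<rho> ((u - unitv j) + unitv k)" by (simp add: algebra_simps)
    also have "\<dots> = \<rho> ((u - unitv j) + unitv j)" by (rule neighbours)
    finally show ?thesis using True by simp
  qed (use diag in blast)
  have "\<rho> u = (if black u then \<rho> 0 else \<rho> (unitv i\<^sub>0)) \<and>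
        (\<forall>k. \<rho> (u + unitv k) = (if black u then \<rho> (unitv i\<^sub>0) else \<rho> 0))" for u
  proof (induction u rule: lattice_induct)
    case 1
    show ?case using neighbours[of 0 _ i\<^sub>0] by (simp add: black_zero)
  next
    case (2 u i)
    thus ?case using two_steps[of u i] black_add_unitv[of u i] by auto
  next
    case (3 u i)
    have "\<rho> (u - unitv i) = \<rho> (u + unitv i)"
      using two_steps[of "u - unitv i" i i] by simp
    moreover have "\<rho> (u - unitv i + unitv k) = \<rho> u" for k
      using neighbours[of "u - unitv i" k i] by simp
    moreover have "black (u - unitv i) \<longleftrightarrow> \<not> black u"
      using black_add_unitv[of "u - unitv i" i] by simp
    ultimately show ?case using 3 by auto
  qed
  thus ?thesis by blast
qed

section \<open>Koenigs nets and the function nu\<close>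

definition diag_ratio :: "(int ^ 'm::finite \<Rightarrow> 'a::real_vector) \<Rightarrow> int ^ 'm \<Rightarrow> 'm \<Rightarrow> 'm \<Rightarrow> real" where
  "diag_ratio f u i j =
     len_ratio (diag_point (f u) (f (u + unitv i)) (f (u + unitv i + unitv j)) (f (u + unitv j)))
       (f (u + unitv i + unitv j)) (f u)"

definition codiag_ratio :: "(int ^ 'm::finite \<Rightarrow> 'a::real_vector) \<Rightarrow> int ^ 'm \<Rightarrow> 'm \<Rightarrow> 'm \<Rightarrow> real" where
  "codiag_ratio f u i j =
     len_ratio (diag_point (f u) (f (u + unitv i)) (f (u + unitv i + unitv j)) (f (u + unitv j)))
       (f (u + unitv j)) (f (u + unitv i))"

lemma nu_cond_iff:
  "nu_cond f \<nu> \<longleftrightarrow> (\<forall>u. \<nu> u \<noteq> 0) \<and>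
     (\<forall>u i j. i \<noteq> j \<longrightarrow> \<nu> (u + unitv i + unitv j) / \<nu> u = diag_ratio f u i j \<and>
                          \<nu> (u + unitv j) / \<nu> (u + unitv i) = codiag_ratio f u i j)"
  unfolding nu_cond_def diag_ratio_def codiag_ratio_def Let_def by simp

lemma qnet_quad_coords:
  assumes "qnet f" "i \<noteq> j"
  shows "\<exists>M x y. quad_coords (f u) (f (u + unitv i)) (f (u + unitv i + unitv j)) (f (u + unitv j))
                   M x y (diag_ratio f u i j) (codiag_ratio f u i j)"
  using nondeg_quad_coords assms unfolding qnet_def diag_ratio_def codiag_ratio_def by blast

lemma koenigs_edge_scaling:
  fixes f :: "int ^ 'm::finite \<Rightarrow> real ^ 'n::finite"
  assumes dim: "CARD('m) \<ge> 2" and qf: "qnet f" and "koenigs f"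
  obtains f' :: "int ^ 'm \<Rightarrow> real ^ 'n" and c
  where "\<And>u i j. i \<noteq> j \<Longrightarrow>
           dual_quad (f u) (f (u + unitv i)) (f (u + unitv i + unitv j)) (f (u + unitv j))
                     (f' u) (f' (u + unitv i)) (f' (u + unitv i + unitv j)) (f' (u + unitv j))"
    and "\<And>u i. c i u \<noteq> 0" "\<And>u i. f' (u + unitv i) - f' u = c i u *\<^sub>R (f (u + unitv i) - f u)"
proof -
  obtain f' :: "int ^ 'm \<Rightarrow> real ^ 'n" where qf': "qnet f'" and dual: "\<forall>u i j. i \<noteq> j \<longrightarrow>
        dual_quad (f u) (f (u + unitv i)) (f (u + unitv i + unitv j)) (f (u + unitv j))
                  (f' u) (f' (u + unitv i)) (f' (u + unitv i + unitv j)) (f' (u + unitv j))"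
    using \<open>koenigs f\<close> unfolding koenigs_def by blast
  have "\<forall>i u. \<exists>c. c \<noteq> 0 \<and> f' (u + unitv i) - f' u = c *\<^sub>R (f (u + unitv i) - f u)"
  proof (intro allI)
    fix i :: 'm and u :: "int ^ 'm"
    obtain j where "j \<noteq> i" using exists_other_direction[OF dim] by blast
    hence "nondeg_quad (f' u) (f' (u + unitv i)) (f' (u + unitv i + unitv j)) (f' (u + unitv j))"
      "nondeg_quad (f u) (f (u + unitv i)) (f (u + unitv i + unitv j)) (f (u + unitv j))"
      using qf qf' unfolding qnet_def by auto
    hence "f' (u + unitv i) - f' u \<noteq> 0" "f (u + unitv i) - f u \<noteq> 0"
      unfolding nondeg_quad_def by auto
    moreover have "parallel (f' (u + unitv i) - f' u) (f (u + unitv i) - f u)"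
      using dual[rule_format, of i j u] \<open>j \<noteq> i\<close> unfolding dual_quad_def by auto
    ultimately show "\<exists>c. c \<noteq> 0 \<and> f' (u + unitv i) - f' u = c *\<^sub>R (f (u + unitv i) - f u)"
      using parallel_nonzero by blast
  qed
  then obtain c where c: "\<forall>i u. c i u \<noteq> 0 \<and> f' (u + unitv i) - f' u = c i u *\<^sub>R (f (u + unitv i) - f u)"
    by metis
  show thesis by (rule that[of f' c]) (use dual c in auto)
qed

lemma koenigs_edge_relations:
  fixes f f' :: "int ^ 'm::finite \<Rightarrow> real ^ 'n::finite"
  assumes qf: "qnet f" and "i \<noteq> j"
    and dual: "dual_quad (f u) (f (u + unitv i)) (f (u + unitv i + unitv j)) (f (u + unitv j))
                 (f' u) (f' (u + unitv i)) (f' (u + unitv i + unitv j)) (f' (u + unitv j))"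
    and edge: "\<And>u i. f' (u + unitv i) - f' u = c i u *\<^sub>R (f (u + unitv i) - f u)"
  shows "c j (u + unitv i) * diag_ratio f u i j = c i u \<and>
         c i (u + unitv j) * diag_ratio f u i j = c j u \<and>
         c j u * codiag_ratio f u i j = c i u"
proof -
  obtain M x y where coords: "quad_coords (f u) (f (u + unitv i)) (f (u + unitv i + unitv j))
      (f (u + unitv j)) M x y (diag_ratio f u i j) (codiag_ratio f u i j)"
    using qnet_quad_coords[OF qf \<open>i \<noteq> j\<close>] by blast
  have "f' (u + unitv i + unitv j) - f' (u + unitv j) =
        c i (u + unitv j) *\<^sub>R (f (u + unitv i + unitv j) - f (u + unitv j))"
    using edge[of "u + unitv j" i] by (simp add: unitv_commute)
  thus ?thesis
    by (intro dual_quad_edge_relations[OF coords _ _ _ _ dual] edge)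
qed

lemma quotient_from_products:
  fixes x y z p q \<alpha> :: real
  assumes "y \<noteq> 0" "q \<noteq> 0" "x * y = 1 / p" "y * z = 1 / q" "q * \<alpha> = p"
  shows "z / x = \<alpha>"
proof -
  have "z / x = (y * z) / (x * y)" using assms(1) by simp
  also have "\<dots> = p / q" using assms(3,4) by simp
  also have "\<dots> = \<alpha>" using assms(2,5) by (auto simp: field_simps)
  finally show ?thesis .
qed

(* The edge factors around an elementary quadrilateral: from c_ji alpha = c_i and
   c_ij alpha = c_j follows the cocycle condition c_i c_ij = c_j c_ji. *)
lemma cross_products_equal:
  fixes a b c d \<alpha> :: real
  assumes "b * \<alpha> = a" and "d * \<alpha> = c"
  shows "a * d = c * b"
proof -
  have "a * d = b * (d * \<alpha>)" using assms(1) by (simp add: mult_ac)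
  also have "\<dots> = c * b" using assms(2) by (simp add: mult_ac)
  finally show ?thesis .
qed

(* Koenigs net => existence of nu: the edge factors satisfy c_i(u) c_i(u+e_j) =
   c_j(u) c_j(u+e_i), hence nu(u) nu(u+e_i) = 1/c_i(u) is solvable, and this nu has the
   required ratios. *)
lemma koenigs_imp_nu:
  fixes f :: "int ^ 'm::finite \<Rightarrow> real ^ 'n::finite"
  assumes dim: "CARD('m) \<ge> 2" and qf: "qnet f" and "koenigs f"
  shows "\<exists>\<nu>. nu_cond f \<nu>"
proof -
  obtain f' :: "int ^ 'm \<Rightarrow> real ^ 'n" and c where dual: "\<And>u i j. i \<noteq> j \<Longrightarrow>
           dual_quad (f u) (f (u + unitv i)) (f (u + unitv i + unitv j)) (f (u + unitv j))
                     (f' u) (f' (u + unitv i)) (f' (u + unitv i + unitv j)) (f' (u + unitv j))"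
    and c: "\<And>u i. c i u \<noteq> 0" and edge: "\<And>u i. f' (u + unitv i) - f' u = c i u *\<^sub>R (f (u + unitv i) - f u)"
    using koenigs_edge_scaling[OF dim qf \<open>koenigs f\<close>] by blast
  have relations: "c j (u + unitv i) * diag_ratio f u i j = c i u \<and>
         c i (u + unitv j) * diag_ratio f u i j = c j u \<and> c j u * codiag_ratio f u i j = c i u"
    if "i \<noteq> j" for u i j
    using koenigs_edge_relations[where c = c, OF qf that dual[OF that] edge] .
  have cocycle: "c i u * c i (u + unitv j) = c j u * c j (u + unitv i)" for u i j
  proof (cases "i = j")
    case False
    thus ?thesis using relations[OF False] cross_products_equal by blast
  qed simp
  then obtain \<nu> where \<nu>: "\<forall>u. \<nu> u \<noteq> 0" and products: "\<forall>u i. \<nu> u * \<nu> (u + unitv i) = 1 / c i u"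
    using alternating_potential[of c, OF c cocycle] by blast
  have "\<nu> (u + unitv i + unitv j) / \<nu> u = diag_ratio f u i j \<and>
        \<nu> (u + unitv j) / \<nu> (u + unitv i) = codiag_ratio f u i j" if "i \<noteq> j" for u i j
  proof
    show "\<nu> (u + unitv i + unitv j) / \<nu> u = diag_ratio f u i j"
      using \<nu> products relations[OF that] c
      by (intro quotient_from_products[where y = "\<nu> (u + unitv i)" and q = "c j (u + unitv i)"
          and p = "c i u"]) auto
    show "\<nu> (u + unitv j) / \<nu> (u + unitv i) = codiag_ratio f u i j"
      using \<nu> products relations[OF that] c
      by (intro quotient_from_products[where y = "\<nu> u" and q = "c j u" and p = "c i u"])
        (auto simp: mult.commute)
  qed
  thus ?thesis unfolding nu_cond_iff using \<nu> by blast
qed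

lemma nu_dual_quad:
  fixes f :: "int ^ 'm::finite \<Rightarrow> real ^ 'n::finite"
  assumes qf: "qnet f" and nu: "nu_cond f \<nu>" and "i \<noteq> j"
    and AB: "B' = A' + (1 / (\<nu> u * \<nu> (u + unitv i))) *\<^sub>R (f (u + unitv i) - f u)"
    and BC: "C' = B' + (1 / (\<nu> (u + unitv i) * \<nu> (u + unitv i + unitv j))) *\<^sub>R
                       (f (u + unitv i + unitv j) - f (u + unitv i))"
    and AD: "D' = A' + (1 / (\<nu> u * \<nu> (u + unitv j))) *\<^sub>R (f (u + unitv j) - f u)"
  shows "C' = D' + (1 / (\<nu> (u + unitv j) * \<nu> (u + unitv i + unitv j))) *\<^sub>R
                     (f (u + unitv i + unitv j) - f (u + unitv j)) \<and>
         nondeg_quad A' B' C' D' \<and>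
         dual_quad (f u) (f (u + unitv i)) (f (u + unitv i + unitv j)) (f (u + unitv j)) A' B' C' D'"
proof -
  obtain M x y where coords: "quad_coords (f u) (f (u + unitv i)) (f (u + unitv i + unitv j))
      (f (u + unitv j)) M x y (diag_ratio f u i j) (codiag_ratio f u i j)"
    using qnet_quad_coords[OF qf \<open>i \<noteq> j\<close>] by blast
  have nonzero: "\<nu> v \<noteq> 0" for v using nu unfolding nu_cond_iff by blast
  have ratios: "diag_ratio f u i j = \<nu> (u + unitv i + unitv j) / \<nu> u"
    "codiag_ratio f u i j = \<nu> (u + unitv j) / \<nu> (u + unitv i)"
    using nu \<open>i \<noteq> j\<close> unfolding nu_cond_iff by simp_all
  define k where "k = 1 / (\<nu> u * \<nu> (u + unitv i))"
  have scalars: "1 / (\<nu> (u + unitv i) * \<nu> (u + unitv i + unitv j)) = k / diag_ratio f u i j"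
    "1 / (\<nu> u * \<nu> (u + unitv j)) = k / codiag_ratio f u i j"
    "1 / (\<nu> (u + unitv j) * \<nu> (u + unitv i + unitv j)) =
       k / (diag_ratio f u i j * codiag_ratio f u i j)"
    unfolding ratios k_def using nonzero by (simp_all add: field_simps)
  have "k \<noteq> 0" unfolding k_def using nonzero by simp
  from dual_quad_from_ratios[OF coords this]
  show ?thesis
    using AB BC AD unfolding scalars k_def[symmetric] by blast
qed

(* Existence of nu => Koenigs net: the edge form w_i(u) = (f_i - f)/(nu nu_i) is closed, and
   its potential is the dual net. *)
lemma nu_imp_koenigs:
  fixes f :: "int ^ 'm::finite \<Rightarrow> real ^ 'n::finite"
  assumes qf: "qnet f" and nu: "nu_cond f \<nu>"
  shows "koenigs f"
proof -
  define w where "w i u = (1 / (\<nu> u * \<nu> (u + unitv i))) *\<^sub>R (f (u + unitv i) - f u)" for i u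
  note dual_step = nu_dual_quad[OF qf nu, folded w_def]
  have "w i u + w j (u + unitv i) = w j u + w i (u + unitv j)" for u i j
  proof (cases "i = j")
    case False
    from dual_step[OF False, of "w i u" 0, folded w_def]
    show ?thesis unfolding w_def by (simp add: unitv_commute)
  qed simp
  then obtain f' where f': "\<forall>u i. f' (u + unitv i) = f' u + w i u"
    using potential[where w = w] by blast
  have "nondeg_quad (f' u) (f' (u + unitv i)) (f' (u + unitv i + unitv j)) (f' (u + unitv j)) \<and>
        dual_quad (f u) (f (u + unitv i)) (f (u + unitv i + unitv j)) (f (u + unitv j))
                  (f' u) (f' (u + unitv i)) (f' (u + unitv i + unitv j)) (f' (u + unitv j))"
    if "i \<noteq> j" for u i j
    using dual_step[OF that] f' unfolding w_def by simp
  thus ?thesis unfolding koenigs_def qnet_def by blast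
qed

lemma nu_cond_unique:
  fixes f :: "int ^ 'm::finite \<Rightarrow> real ^ 'n::finite"
  assumes dim: "CARD('m) \<ge> 2" and nu: "nu_cond f \<nu>" and nu': "nu_cond f \<nu>'"
  shows "\<exists>a b. a \<noteq> 0 \<and> b \<noteq> 0 \<and> (\<forall>u. \<nu>' u = (if black u then a else b) * \<nu> u)"
proof -
  have nonzero: "\<nu> u \<noteq> 0" "\<nu>' u \<noteq> 0" for u using nu nu' unfolding nu_cond_iff by blast+
  define \<rho> where "\<rho> u = \<nu>' u / \<nu> u" for u
  have "\<rho> (u + unitv i + unitv j) = \<rho> u \<and> \<rho> (u + unitv j) = \<rho> (u + unitv i)" if "i \<noteq> j" for u i j
  proof -
    have "\<nu> (u + unitv i + unitv j) / \<nu> u = \<nu>' (u + unitv i + unitv j) / \<nu>' u"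
         "\<nu> (u + unitv j) / \<nu> (u + unitv i) = \<nu>' (u + unitv j) / \<nu>' (u + unitv i)"
      using nu nu' that unfolding nu_cond_iff by simp_all
    thus ?thesis unfolding \<rho>_def using nonzero by (simp add: field_simps)
  qed
  hence parity: "\<rho> u = (if black u then \<rho> 0 else \<rho> (unitv i))" for u i
    using parity_constant[OF dim] by blast
  show ?thesis
  proof (intro exI conjI allI)
    show "\<rho> 0 \<noteq> 0" "\<rho> (unitv undefined) \<noteq> 0" unfolding \<rho>_def using nonzero by simp_all
    show "\<nu>' u = (if black u then \<rho> 0 else \<rho> (unitv undefined)) * \<nu> u" for u
      using parity[of u] nonzero[of u] unfolding \<rho>_def[of u] by (simp add: field_simps)
  qed
qed

lemma nu_cond_rescale:
  fixes f :: "int ^ 'm::finite \<Rightarrow> real ^ 'n::finite"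
  assumes nu: "nu_cond f \<nu>" and "a \<noteq> 0" "b \<noteq> 0"
    and \<nu>': "\<forall>u. \<nu>' u = (if black u then a else b) * \<nu> u"
  shows "nu_cond f \<nu>'"
proof -
  define s where "s u = (if black u then a else b)" for u :: "int ^ 'm"
  have s: "s u \<noteq> 0" "s (u + unitv i + unitv j) = s u" "s (u + unitv j) = s (u + unitv i)" for u i j
    unfolding s_def black_add_unitv using \<open>a \<noteq> 0\<close> \<open>b \<noteq> 0\<close> by simp_all
  have \<nu>'_eq: "\<nu>' u = s u * \<nu> u" for u using \<nu>' unfolding s_def by simp
  have "\<nu>' (u + unitv i + unitv j) / \<nu>' u = \<nu> (u + unitv i + unitv j) / \<nu> u"
       "\<nu>' (u + unitv j) / \<nu>' (u + unitv i) = \<nu> (u + unitv j) / \<nu> (u + unitv i)" for u i j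
    unfolding \<nu>'_eq using s(1) s(2)[of u i j] s(3)[of u j i] by simp_all
  thus ?thesis using nu s(1) unfolding nu_cond_iff \<nu>'_eq by simp
qed

theorem mainTheorem7:
  fixes f :: "int ^ 'm::finite \<Rightarrow> real ^ 'n::finite"
  assumes "CARD('n) \<ge> 3" and "CARD('m) \<ge> 2" and "qnet f"
  shows "(koenigs f \<longleftrightarrow> (\<exists>\<nu>. nu_cond f \<nu>)) \<and>
         (\<forall>\<nu> \<nu>'. nu_cond f \<nu> \<longrightarrow>
            (nu_cond f \<nu>' \<longleftrightarrow>
              (\<exists>a b. a \<noteq> 0 \<and> b \<noteq> 0 \<and> (\<forall>u. \<nu>' u = (if black u then a else b) * \<nu> u))))"
  using koenigs_imp_nu[OF assms(2,3)] nu_imp_koenigs[OF assms(3)]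
    nu_cond_unique[OF assms(2)] nu_cond_rescale
  by blast

end
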